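(* Let $\mathcal M$ be a closed subspace of $H^2_p$ with $S^*\mathcal M\subset\mathcal M$ and $\ker S^*\subset\mathcal M$. Then $R_{\mathcal M}=S^*P_{\mathcal M}S$, $R_{\mathcal M}S^*=S^*P_{\mathcal M}$, and $Q_{\mathcal M}=P_{\mathcal M}S$.
   Context: $S$ is the forward shift on $H^2_p$; $P_{\mathcal M}$ is the orthogonal projection of $H^2_p$ onto $\mathcal M$; $R_{\mathcal M}$ is the orthogonal projection of $H^2_p$ onto $S^*\mathcal M$; $Q_{\mathcal M}=SR_{\mathcal M}$. *)

theory Defs
  imports "HOL-Analysis.Analysis"
begin

text \<open>Model of the vector-valued Hardy space H^2_p: via Taylor coefficients,
  H^2_p is identified with square-summable sequences in C^p, i.e. functions
  nat => complex^'p (the index type 'p has p elements) with summable squared norms.\<close>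

type_synonym 'p h2seq = "nat \<Rightarrow> complex ^ 'p"

definition H2 :: "('p::finite) h2seq set" where
  "H2 = {f. summable (\<lambda>n. (norm (f n))\<^sup>2)}"

definition h2_inner :: "('p::finite) h2seq \<Rightarrow> 'p h2seq \<Rightarrow> complex" where
  "h2_inner f g = (\<Sum>n. \<Sum>i\<in>UNIV. f n $ i * cnj (g n $ i))"

definition h2_norm :: "('p::finite) h2seq \<Rightarrow> real" where
  "h2_norm f = sqrt (\<Sum>n. (norm (f n))\<^sup>2)"

definition h2_closed_subspace :: "('p::finite) h2seq set \<Rightarrow> bool" where
  "h2_closed_subspace M \<longleftrightarrow>
     M \<subseteq> H2 \<and> (\<lambda>n. 0) \<in> M \<and>
     (\<forall>f\<in>M. \<forall>g\<in>M. (\<lambda>n. f n + g n) \<in> M) \<and>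
     (\<forall>c::complex. \<forall>f\<in>M. (\<lambda>n. c *s f n) \<in> M) \<and>
     (\<forall>x f. (\<forall>k. x k \<in> M) \<and> f \<in> H2 \<and>
            ((\<lambda>k. h2_norm (\<lambda>n. x k n - f n)) \<longlonglongrightarrow> 0) \<longrightarrow> f \<in> M)"

text \<open>Forward shift (multiplication by z) and backward shift (its adjoint).\<close>
definition shift :: "('p::finite) h2seq \<Rightarrow> 'p h2seq" where
  "shift f = (\<lambda>n. if n = 0 then 0 else f (n - 1))"

definition bshift :: "('p::finite) h2seq \<Rightarrow> 'p h2seq" where
  "bshift f = (\<lambda>n. f (Suc n))"

definition ker_bshift :: "('p::finite) h2seq set" where
  "ker_bshift = {f \<in> H2. bshift f = (\<lambda>n. 0)}"

definition oproj :: "('p::finite) h2seq set \<Rightarrow> 'p h2seq \<Rightarrow> 'p h2seq" where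
  "oproj N f = (THE g. g \<in> N \<and> (\<forall>h\<in>N. h2_inner (\<lambda>n. f n - g n) h = 0))"

definition P_M :: "('p::finite) h2seq set \<Rightarrow> 'p h2seq \<Rightarrow> 'p h2seq" where
  "P_M M = oproj M"

definition R_M :: "('p::finite) h2seq set \<Rightarrow> 'p h2seq \<Rightarrow> 'p h2seq" where
  "R_M M = oproj (bshift ` M)"

definition Q_M :: "('p::finite) h2seq set \<Rightarrow> 'p h2seq \<Rightarrow> 'p h2seq" where
  "Q_M M = (\<lambda>f. shift (R_M M f))"

end

(*
  Orthogonal projections onto closed subspaces of H^2_p exist: a minimizing sequence for the
  distance is Cauchy by the parallelogram law, its coordinatewise limit lies in M, and the
  variational inequality makes the residual orthogonal to M.

  Because ker S^* (the constants) lies in M, S S^* m = m - m(0) lies in M for every m in M.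
  For g = P_M f and m in M this gives <S^*(f - g), S^* m> = <f - g, S S^* m> = 0, so S^* g is
  the projection of S^* f onto S^*M, i.e. R_M S^* = S^* P_M; taking f = S h yields
  R_M = S^* P_M S. Finally S h is orthogonal to the constants in M, so P_M S h vanishes at 0
  and Q_M h = S S^* P_M S h = P_M S h.
*)

theory Submission
  imports Defs
begin

abbreviation vec_cinner :: "complex^'p::finite \<Rightarrow> complex^'p \<Rightarrow> complex" where
  "vec_cinner x y \<equiv> (\<Sum>i\<in>UNIV. x $ i * cnj (y $ i))"

lemma norm_vec_power2: "(norm (x::complex^'p::finite))\<^sup>2 = (\<Sum>i\<in>UNIV. (norm (x$i))\<^sup>2)"
  unfolding norm_vec_def L2_set_def by (simp add: sum_nonneg)

lemma vec_cinner_self: "vec_cinner x x = of_real ((norm x)\<^sup>2)"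
  unfolding norm_vec_power2 of_real_sum complex_norm_square by simp

lemma norm_vec_cinner_le: "norm (vec_cinner x y) \<le> ((norm x)\<^sup>2 + (norm y)\<^sup>2) / 2"
proof -
  have "norm (vec_cinner x y) \<le> (\<Sum>i\<in>UNIV. norm (x $ i * cnj (y $ i)))"
    by (rule norm_sum)
  also have "\<dots> \<le> (\<Sum>i\<in>UNIV. ((norm (x$i))\<^sup>2 + (norm (y$i))\<^sup>2) / 2)"
  proof (rule sum_mono)
    fix i
    have "0 \<le> (norm (x$i) - norm (y$i))\<^sup>2" by simp
    then show "norm (x $ i * cnj (y $ i)) \<le> ((norm (x$i))\<^sup>2 + (norm (y$i))\<^sup>2) / 2"
      by (simp add: norm_mult power2_eq_square algebra_simps)
  qed
  also have "\<dots> = ((norm x)\<^sup>2 + (norm y)\<^sup>2) / 2"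
    unfolding norm_vec_power2 sum_divide_distrib[symmetric] sum.distrib ..
  finally show ?thesis .
qed

lemma Re_vec_cinner: "Re (vec_cinner x y) = x \<bullet> y"
  by (simp add: inner_vec_def inner_complex_def Re_sum)

lemma vec_cinner_scale_ii: "vec_cinner x (\<i> *s y) = - \<i> * vec_cinner x y"
  by (simp add: sum_distrib_left algebra_simps)

lemma abs_inner_le_half_sum_squares:
  "\<bar>(x::'a::real_inner) \<bullet> y\<bar> \<le> ((norm x)\<^sup>2 + (norm y)\<^sup>2) / 2"
proof -
  have "\<bar>x \<bullet> y\<bar> \<le> norm x * norm y" by (rule Cauchy_Schwarz_ineq2)
  moreover have "0 \<le> (norm x - norm y)\<^sup>2" by simp
  ultimately show ?thesis by (simp add: power2_eq_square algebra_simps)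
qed

lemma power2_norm_add_le:
  "(norm ((a::'a::real_normed_vector) + b))\<^sup>2 \<le> 2 * (norm a)\<^sup>2 + 2 * (norm b)\<^sup>2"
proof -
  have "(norm (a + b))\<^sup>2 \<le> (norm a + norm b)\<^sup>2"
    by (simp add: power_mono norm_triangle_ineq)
  moreover have "0 \<le> (norm a - norm b)\<^sup>2" by simp
  ultimately show ?thesis by (simp add: power2_eq_square algebra_simps)
qed

lemma quadratic_nonneg_imp_linear_coeff_zero:
  fixes b c :: real
  assumes "c \<ge> 0" and "\<And>t. 0 \<le> t\<^sup>2 * c - 2 * t * b"
  shows "b = 0"
proof -
  define t where "t = b / (c + 1)"
  have b: "b = t * (c + 1)" using assms(1) by (simp add: t_def)
  have "0 \<le> t\<^sup>2 * c - 2 * t * b" by (rule assms(2))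
  also have "\<dots> = - t\<^sup>2 * (c + 2)" by (simp add: b power2_eq_square algebra_simps)
  finally have "t\<^sup>2 * (c + 2) \<le> 0" by simp
  then have "t = 0" using assms(1) by (simp add: mult_le_0_iff)
  then show ?thesis by (simp add: b)
qed

lemma H2_add: "f \<in> H2 \<Longrightarrow> g \<in> H2 \<Longrightarrow> (\<lambda>n. f n + g n) \<in> H2"
  unfolding H2_def
  by (auto intro!: summable_comparison_test[where g="\<lambda>n. 2 * (norm (f n))\<^sup>2 + 2 * (norm (g n))\<^sup>2"]
                   summable_add summable_mult power2_norm_add_le)

lemma H2_scaleR: "f \<in> H2 \<Longrightarrow> (\<lambda>n. t *\<^sub>R f n) \<in> H2"
  unfolding H2_def by (simp add: power_mult_distrib summable_mult)

lemma H2_diff: "f \<in> H2 \<Longrightarrow> g \<in> H2 \<Longrightarrow> (\<lambda>n. f n - g n) \<in> H2"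
  using H2_add[of f "\<lambda>n. (-1) *\<^sub>R g n"] H2_scaleR[of g "-1"] by simp

lemma H2_shift: "f \<in> H2 \<Longrightarrow> shift f \<in> H2"
  using summable_Suc_iff[of "\<lambda>n. (norm (shift f n))\<^sup>2"] by (simp add: H2_def shift_def)

lemma H2_bshift: "f \<in> H2 \<Longrightarrow> bshift f \<in> H2"
  using summable_Suc_iff[of "\<lambda>n. (norm (f n))\<^sup>2"] by (simp add: H2_def bshift_def)

lemma H2_at_zero: "(\<lambda>n. if n = 0 then v else 0) \<in> H2"
  unfolding H2_def mem_Collect_eq by (rule summable_finite[of "{0}"]) auto

lemma summable_inner_H2: "f \<in> H2 \<Longrightarrow> g \<in> H2 \<Longrightarrow> summable (\<lambda>n. f n \<bullet> g n)"
  unfolding H2_def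
  by (rule summable_comparison_test'[where g="\<lambda>n. ((norm (f n))\<^sup>2 + (norm (g n))\<^sup>2) / 2" and N=0])
     (auto intro!: summable_add summable_divide simp: abs_inner_le_half_sum_squares[simplified])

lemma summable_vec_cinner_H2: "f \<in> H2 \<Longrightarrow> g \<in> H2 \<Longrightarrow> summable (\<lambda>n. vec_cinner (f n) (g n))"
  unfolding H2_def
  by (rule summable_comparison_test'[where g="\<lambda>n. ((norm (f n))\<^sup>2 + (norm (g n))\<^sup>2) / 2" and N=0])
     (auto intro!: summable_add summable_divide norm_vec_cinner_le[simplified])

lemma bshift_shift [simp]: "bshift (shift f) = f"
  by (simp add: bshift_def shift_def)

lemma shift_bshift: "f 0 = 0 \<Longrightarrow> shift (bshift f) = f"
  by (auto simp: shift_def bshift_def fun_eq_iff)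

definition h2_sqnorm :: "('p::finite) h2seq \<Rightarrow> real" where
  "h2_sqnorm f = (\<Sum>n. (norm (f n))\<^sup>2)"

definition h2_rinner :: "('p::finite) h2seq \<Rightarrow> 'p h2seq \<Rightarrow> real" where
  "h2_rinner f g = (\<Sum>n. f n \<bullet> g n)"

lemma h2_norm_eq_sqrt: "h2_norm f = sqrt (h2_sqnorm f)"
  by (simp add: h2_norm_def h2_sqnorm_def)

lemma h2_sqnorm_nonneg: "f \<in> H2 \<Longrightarrow> 0 \<le> h2_sqnorm f"
  unfolding h2_sqnorm_def H2_def by (auto intro: suminf_nonneg)

lemma sum_power2_norm_le_h2_sqnorm:
  "finite A \<Longrightarrow> f \<in> H2 \<Longrightarrow> (\<Sum>n\<in>A. (norm (f n))\<^sup>2) \<le> h2_sqnorm f"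
  unfolding h2_sqnorm_def H2_def by (auto intro: sum_le_suminf)

lemma power2_norm_le_h2_sqnorm: "f \<in> H2 \<Longrightarrow> (norm (f n))\<^sup>2 \<le> h2_sqnorm f"
  using sum_power2_norm_le_h2_sqnorm[of "{n}" f] by simp

lemma h2_sqnorm_eq_0_iff: "f \<in> H2 \<Longrightarrow> h2_sqnorm f = 0 \<longleftrightarrow> f = (\<lambda>n. 0)"
  using power2_norm_le_h2_sqnorm[of f] by (fastforce simp: h2_sqnorm_def)

lemma h2_sqnorm_diff_commute: "h2_sqnorm (\<lambda>n. a n - b n) = h2_sqnorm (\<lambda>n. b n - a n)"
  by (simp add: h2_sqnorm_def norm_minus_commute)

lemma h2_sqnorm_scaleR: "f \<in> H2 \<Longrightarrow> h2_sqnorm (\<lambda>n. t *\<^sub>R f n) = t\<^sup>2 * h2_sqnorm f"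
  unfolding h2_sqnorm_def H2_def by (simp add: power_mult_distrib suminf_mult)

lemma h2_sqnorm_add_scaleR:
  assumes "a \<in> H2" "b \<in> H2"
  shows "h2_sqnorm (\<lambda>n. a n + t *\<^sub>R b n) = h2_sqnorm a + 2 * t * h2_rinner a b + t\<^sup>2 * h2_sqnorm b"
proof -
  have s: "summable (\<lambda>n. (norm (a n))\<^sup>2)" "summable (\<lambda>n. (norm (b n))\<^sup>2)"
    "summable (\<lambda>n. a n \<bullet> b n)"
    using assms summable_inner_H2[OF assms] by (auto simp: H2_def)
  have "(\<lambda>n. (norm (a n + t *\<^sub>R b n))\<^sup>2)
      = (\<lambda>n. (norm (a n))\<^sup>2 + (2 * t) * (a n \<bullet> b n) + t\<^sup>2 * (norm (b n))\<^sup>2)"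
    by (simp only: power2_norm_eq_inner)
      (simp add: inner_add_left inner_add_right inner_commute power2_eq_square algebra_simps)
  then show ?thesis
    unfolding h2_sqnorm_def h2_rinner_def
    using s by (simp add: suminf_add[symmetric] summable_add summable_mult suminf_mult)
qed

lemma h2_parallelogram:
  assumes "a \<in> H2" "b \<in> H2"
  shows "h2_sqnorm (\<lambda>n. a n + b n) + h2_sqnorm (\<lambda>n. a n - b n) = 2 * h2_sqnorm a + 2 * h2_sqnorm b"
  using h2_sqnorm_add_scaleR[OF assms, of 1] h2_sqnorm_add_scaleR[OF assms, of "-1"] by simp

lemma h2_sqnorm_le_of_pointwise_limit:
  assumes lim: "\<And>n. (\<lambda>k. x k n) \<longlonglongrightarrow> y n" and x: "\<And>k. x k \<in> H2"
    and bound: "\<And>k. k \<ge> K \<Longrightarrow> h2_sqnorm (x k) \<le> e"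
  shows "y \<in> H2" "h2_sqnorm y \<le> e"
proof -
  have partial: "(\<Sum>n<N. (norm (y n))\<^sup>2) \<le> e" for N
  proof (rule LIMSEQ_le_const2)
    show "(\<lambda>k. \<Sum>n<N. (norm (x k n))\<^sup>2) \<longlonglongrightarrow> (\<Sum>n<N. (norm (y n))\<^sup>2)"
      by (intro tendsto_intros lim)
    show "\<exists>K. \<forall>k\<ge>K. (\<Sum>n<N. (norm (x k n))\<^sup>2) \<le> e"
      using sum_power2_norm_le_h2_sqnorm[OF _ x] bound by (meson finite_lessThan order_trans)
  qed
  then have "summable (\<lambda>n. (norm (y n))\<^sup>2)"
    by (intro summableI_nonneg_bounded[where x=e]) auto
  then show "y \<in> H2" "h2_sqnorm y \<le> e"
    unfolding H2_def h2_sqnorm_def using partial by (auto intro: suminf_le_const)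
qed

lemma h2_Cauchy_coordinatewise:
  assumes x: "\<And>k. x k \<in> H2"
    and cauchy: "\<And>e. e > 0 \<Longrightarrow> \<exists>K. \<forall>j\<ge>K. \<forall>k\<ge>K. h2_sqnorm (\<lambda>n. x j n - x k n) < e"
  shows "Cauchy (\<lambda>k. x k n)"
proof (rule metric_CauchyI)
  fix e :: real assume "e > 0"
  then obtain K where K: "\<forall>j\<ge>K. \<forall>k\<ge>K. h2_sqnorm (\<lambda>n. x j n - x k n) < e\<^sup>2"
    using cauchy[of "e\<^sup>2"] by auto
  have "dist (x j n) (x k n) < e" if "j \<ge> K" "k \<ge> K" for j k
  proof (rule power2_less_imp_less)
    show "(dist (x j n) (x k n))\<^sup>2 < e\<^sup>2"
      using power2_norm_le_h2_sqnorm[OF H2_diff[OF x[of j] x[of k]], of n] K that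
      by (fastforce simp: dist_norm)
  qed (use \<open>e > 0\<close> in simp)
  then show "\<exists>K. \<forall>j\<ge>K. \<forall>k\<ge>K. dist (x j n) (x k n) < e" by blast
qed

lemma h2_Cauchy_convergent:
  assumes x: "\<And>k. x k \<in> H2"
    and cauchy: "\<And>e. e > 0 \<Longrightarrow> \<exists>K. \<forall>j\<ge>K. \<forall>k\<ge>K. h2_sqnorm (\<lambda>n. x j n - x k n) < e"
  obtains g where "g \<in> H2" "\<And>n. (\<lambda>k. x k n) \<longlonglongrightarrow> g n"
    "(\<lambda>k. h2_norm (\<lambda>n. x k n - g n)) \<longlonglongrightarrow> 0"
proof -
  have xd: "(\<lambda>n. x j n - x k n) \<in> H2" for j k by (rule H2_diff[OF x x])
  have "Cauchy (\<lambda>k. x k n)" for n using x cauchy by (rule h2_Cauchy_coordinatewise)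
  then have lim: "(\<lambda>k. x k n) \<longlonglongrightarrow> lim (\<lambda>k. x k n)" for n
    by (simp add: Cauchy_convergent_iff convergent_LIMSEQ_iff)
  define g where "g n = lim (\<lambda>k. x k n)" for n
  note lim = lim[folded g_def]
  have tail: "\<exists>K. \<forall>k\<ge>K. (\<lambda>n. x k n - g n) \<in> H2 \<and> h2_sqnorm (\<lambda>n. x k n - g n) \<le> e"
    if "e > 0" for e
  proof -
    obtain K where K: "\<forall>j\<ge>K. \<forall>k\<ge>K. h2_sqnorm (\<lambda>n. x j n - x k n) < e"
      using cauchy[OF \<open>e > 0\<close>] by auto
    have "(\<lambda>n. x k n - g n) \<in> H2 \<and> h2_sqnorm (\<lambda>n. x k n - g n) \<le> e" if "k \<ge> K" for k
    proof -
      have pointwise: "(\<lambda>j. x k n - x j n) \<longlonglongrightarrow> x k n - g n" for n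
        by (intro tendsto_intros lim)
      have bound: "h2_sqnorm (\<lambda>n. x k n - x j n) \<le> e" if "j \<ge> K" for j
        using K \<open>k \<ge> K\<close> that by (simp add: less_imp_le)
      show ?thesis
        using h2_sqnorm_le_of_pointwise_limit[where x="\<lambda>j n. x k n - x j n", OF pointwise xd bound]
        by blast
    qed
    then show ?thesis by blast
  qed
  obtain K where "(\<lambda>n. x K n - g n) \<in> H2" using tail[of 1] by auto
  from H2_diff[OF x[of K] this] have "g \<in> H2" by simp
  moreover have "(\<lambda>k. h2_sqnorm (\<lambda>n. x k n - g n)) \<longlonglongrightarrow> 0"
  proof (rule LIMSEQ_I)
    fix r :: real assume "r > 0"
    then obtain K where K: "\<forall>k\<ge>K. (\<lambda>n. x k n - g n) \<in> H2 \<and> h2_sqnorm (\<lambda>n. x k n - g n) \<le> r / 2"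
      using tail[of "r / 2"] by auto
    have "norm (h2_sqnorm (\<lambda>n. x k n - g n) - 0) < r" if "k \<ge> K" for k
      using K that h2_sqnorm_nonneg[of "\<lambda>n. x k n - g n"] \<open>r > 0\<close> by auto
    then show "\<exists>K. \<forall>k\<ge>K. norm (h2_sqnorm (\<lambda>n. x k n - g n) - 0) < r" by blast
  qed
  then have "(\<lambda>k. h2_norm (\<lambda>n. x k n - g n)) \<longlonglongrightarrow> 0"
    unfolding h2_norm_eq_sqrt using tendsto_real_sqrt by force
  ultimately show ?thesis using lim that by blast
qed

lemma h2_closed_subspace_subset: "h2_closed_subspace M \<Longrightarrow> M \<subseteq> H2"
  by (simp add: h2_closed_subspace_def)

lemma h2_closed_subspace_zero: "h2_closed_subspace M \<Longrightarrow> (\<lambda>n. 0) \<in> M"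
  by (simp add: h2_closed_subspace_def)

lemma h2_closed_subspace_add:
  "h2_closed_subspace M \<Longrightarrow> a \<in> M \<Longrightarrow> b \<in> M \<Longrightarrow> (\<lambda>n. a n + b n) \<in> M"
  by (simp add: h2_closed_subspace_def)

lemma h2_closed_subspace_smult: "h2_closed_subspace M \<Longrightarrow> a \<in> M \<Longrightarrow> (\<lambda>n. c *s a n) \<in> M"
  by (simp add: h2_closed_subspace_def)

lemma h2_closed_subspace_scaleR: "h2_closed_subspace M \<Longrightarrow> a \<in> M \<Longrightarrow> (\<lambda>n. t *\<^sub>R a n) \<in> M"
proof -
  have "(\<lambda>n. of_real t *s a n) = (\<lambda>n. t *\<^sub>R a n)"
    by (auto simp: vec_eq_iff scaleR_conv_of_real[where 'a=complex])
  then show "h2_closed_subspace M \<Longrightarrow> a \<in> M \<Longrightarrow> (\<lambda>n. t *\<^sub>R a n) \<in> M"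
    using h2_closed_subspace_smult[of M a "of_real t"] by simp
qed

lemma h2_closed_subspace_diff:
  "h2_closed_subspace M \<Longrightarrow> a \<in> M \<Longrightarrow> b \<in> M \<Longrightarrow> (\<lambda>n. a n - b n) \<in> M"
  using h2_closed_subspace_add[of M a "\<lambda>n. (-1) *\<^sub>R b n"] h2_closed_subspace_scaleR[of M b "-1"]
  by simp

lemma h2_closed_subspace_limit:
  "h2_closed_subspace M \<Longrightarrow> (\<And>k. x k \<in> M) \<Longrightarrow> g \<in> H2 \<Longrightarrow>
    (\<lambda>k. h2_norm (\<lambda>n. x k n - g n)) \<longlonglongrightarrow> 0 \<Longrightarrow> g \<in> M"
  unfolding h2_closed_subspace_def by blast

lemma INF_h2_sqnorm_diff_le:
  assumes "M \<subseteq> H2" "f \<in> H2" "a \<in> M"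
  shows "(INF b\<in>M. h2_sqnorm (\<lambda>n. f n - b n)) \<le> h2_sqnorm (\<lambda>n. f n - a n)"
  using assms by (intro cINF_lower bdd_belowI2[where m=0] h2_sqnorm_nonneg H2_diff) auto

lemma h2_closed_subspace_minimizing_sequence:
  assumes M: "h2_closed_subspace M" and f: "f \<in> H2"
    and d: "d = (INF a\<in>M. h2_sqnorm (\<lambda>n. f n - a n))"
  obtains g where "\<And>k. g k \<in> M"
    "\<And>k. h2_sqnorm (\<lambda>n. f n - g k n) < d + inverse (real (Suc k))"
    "\<And>j k. h2_sqnorm (\<lambda>n. g j n - g k n) \<le> 2 * inverse (real (Suc j)) + 2 * inverse (real (Suc k))"
proof -
  have MH: "M \<subseteq> H2" by (rule h2_closed_subspace_subset[OF M])
  have "\<exists>a\<in>M. h2_sqnorm (\<lambda>n. f n - a n) < d + inverse (real (Suc k))" for k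
    using cInf_lessD[of "(\<lambda>a. h2_sqnorm (\<lambda>n. f n - a n)) ` M"] h2_closed_subspace_zero[OF M]
    unfolding d by fastforce
  then obtain g where g: "\<And>k. g k \<in> M"
    and close: "\<And>k. h2_sqnorm (\<lambda>n. f n - g k n) < d + inverse (real (Suc k))"
    by metis
  have "h2_sqnorm (\<lambda>n. g j n - g k n) \<le> 2 * inverse (real (Suc j)) + 2 * inverse (real (Suc k))"
    for j k
  proof -
    let ?u = "\<lambda>n. f n - g j n" and ?v = "\<lambda>n. f n - g k n"
    let ?m = "\<lambda>n. (1 / 2) *\<^sub>R (g j n + g k n)"
    have uv: "?u \<in> H2" "?v \<in> H2" using MH f g by (auto intro: H2_diff)
    have mM: "?m \<in> M" using M g by (intro h2_closed_subspace_scaleR h2_closed_subspace_add)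
    \<comment> \<open>parallelogram law for the residuals f - g j and f - g k, whose mean is f minus a point of M\<close>
    have "(\<lambda>n. ?u n + ?v n) = (\<lambda>n. 2 *\<^sub>R (f n - ?m n))"
      by (simp add: algebra_simps scaleR_2)
    moreover have "(\<lambda>n. f n - ?m n) \<in> H2" using MH mM f by (auto intro: H2_diff)
    ultimately have "h2_sqnorm (\<lambda>n. ?u n + ?v n) = 4 * h2_sqnorm (\<lambda>n. f n - ?m n)"
      using h2_sqnorm_scaleR[of "\<lambda>n. f n - ?m n" 2] by simp
    moreover have "d \<le> h2_sqnorm (\<lambda>n. f n - ?m n)"
      unfolding d using MH f mM by (rule INF_h2_sqnorm_diff_le)
    moreover have "h2_sqnorm (\<lambda>n. ?u n - ?v n) = h2_sqnorm (\<lambda>n. g j n - g k n)"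
      by (subst h2_sqnorm_diff_commute) simp
    ultimately show ?thesis
      using h2_parallelogram[OF uv] close[of j] close[of k] by linarith
  qed
  with g close show ?thesis using that by blast
qed

lemma h2_closed_subspace_nearest_point:
  assumes M: "h2_closed_subspace M" and f: "f \<in> H2"
  obtains g where "g \<in> M"
    "\<And>a. a \<in> M \<Longrightarrow> h2_sqnorm (\<lambda>n. f n - g n) \<le> h2_sqnorm (\<lambda>n. f n - a n)"
proof -
  have MH: "M \<subseteq> H2" by (rule h2_closed_subspace_subset[OF M])
  define d where "d = (INF a\<in>M. h2_sqnorm (\<lambda>n. f n - a n))"
  obtain gs where gs: "\<And>k. gs k \<in> M"
    and close: "\<And>k. h2_sqnorm (\<lambda>n. f n - gs k n) < d + inverse (real (Suc k))"
    and near: "\<And>j k. h2_sqnorm (\<lambda>n. gs j n - gs k n) \<le> 2 * inverse (real (Suc j)) + 2 * inverse (real (Suc k))"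
    using h2_closed_subspace_minimizing_sequence[OF M f d_def] by blast
  have gsH: "gs k \<in> H2" for k using gs MH by auto
  have inverse_le: "inverse (real (Suc k)) \<le> inverse (real (Suc K))" if "k \<ge> K" for k K
    using that by (simp add: le_imp_inverse_le)
  have "\<exists>K. \<forall>j\<ge>K. \<forall>k\<ge>K. h2_sqnorm (\<lambda>n. gs j n - gs k n) < e" if "e > 0" for e
  proof -
    obtain K :: nat where "4 / e < real K" using reals_Archimedean2 by blast
    then have K: "4 * inverse (real (Suc K)) < e" using \<open>e > 0\<close> by (simp add: field_simps)
    have "h2_sqnorm (\<lambda>n. gs j n - gs k n) < e" if "j \<ge> K" "k \<ge> K" for j k
      using near[of j k] inverse_le[OF that(1)] inverse_le[OF that(2)] K by linarith
    then show ?thesis by blast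
  qed
  then obtain g where g: "g \<in> H2" and lim: "\<And>n. (\<lambda>k. gs k n) \<longlonglongrightarrow> g n"
    and conv: "(\<lambda>k. h2_norm (\<lambda>n. gs k n - g n)) \<longlonglongrightarrow> 0"
    using h2_Cauchy_convergent[where x=gs, OF gsH] by blast
  have gM: "g \<in> M" using h2_closed_subspace_limit[OF M gs g conv] .
  have "h2_sqnorm (\<lambda>n. f n - g n) \<le> d + inverse (real (Suc K))" for K
  proof (rule h2_sqnorm_le_of_pointwise_limit(2)[where x="\<lambda>k n. f n - gs k n"])
    show "(\<lambda>k. f n - gs k n) \<longlonglongrightarrow> f n - g n" for n by (intro tendsto_intros lim)
    show "(\<lambda>n. f n - gs k n) \<in> H2" for k using f gsH by (rule H2_diff)
    show "h2_sqnorm (\<lambda>n. f n - gs k n) \<le> d + inverse (real (Suc K))" if "k \<ge> K" for k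
      using close[of k] inverse_le[OF that] by linarith
  qed
  moreover have "(\<lambda>K. d + inverse (real (Suc K))) \<longlonglongrightarrow> d"
    using tendsto_add[OF tendsto_const LIMSEQ_inverse_real_of_nat, of d] by simp
  ultimately have "h2_sqnorm (\<lambda>n. f n - g n) \<le> d"
    by (intro LIMSEQ_le_const) auto
  then show ?thesis
    using that gM INF_h2_sqnorm_diff_le[OF MH f] unfolding d_def by fastforce
qed

lemma Re_h2_inner: "u \<in> H2 \<Longrightarrow> h \<in> H2 \<Longrightarrow> Re (h2_inner u h) = h2_rinner u h"
  unfolding h2_inner_def h2_rinner_def
  by (simp add: Re_suminf summable_vec_cinner_H2 Re_vec_cinner del: Re_sum)

lemma h2_inner_scale_ii:
  assumes "u \<in> H2" "h \<in> H2"
  shows "h2_inner u (\<lambda>n. \<i> *s h n) = - \<i> * h2_inner u h"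
proof -
  have "(\<lambda>n. vec_cinner (u n) (\<i> *s h n)) = (\<lambda>n. - \<i> * vec_cinner (u n) (h n))"
    by (intro ext) (rule vec_cinner_scale_ii)
  then show ?thesis
    unfolding h2_inner_def using suminf_mult[OF summable_vec_cinner_H2[OF assms], of "- \<i>"] by simp
qed

lemma h2_inner_eq_0I:
  assumes u: "u \<in> H2" and h: "h \<in> H2" "(\<lambda>n. \<i> *s h n) \<in> H2"
    and "h2_rinner u h = 0" "h2_rinner u (\<lambda>n. \<i> *s h n) = 0"
  shows "h2_inner u h = 0"
proof -
  have "Re (h2_inner u h) = 0" using assms Re_h2_inner[OF u h(1)] by simp
  moreover have "Im (h2_inner u h) = 0"
    using assms Re_h2_inner[OF u h(2)] h2_inner_scale_ii[OF u h(1)] by simp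
  ultimately show ?thesis by (simp add: complex_eq_iff)
qed

lemma h2_inner_self: "w \<in> H2 \<Longrightarrow> h2_inner w w = of_real (h2_sqnorm w)"
  unfolding h2_inner_def h2_sqnorm_def H2_def by (simp add: vec_cinner_self suminf_of_real)

lemma h2_inner_diff_left:
  assumes "a \<in> H2" "b \<in> H2" "c \<in> H2"
  shows "h2_inner (\<lambda>n. a n - b n) c = h2_inner a c - h2_inner b c"
proof -
  have "(\<lambda>n. vec_cinner (a n - b n) (c n)) = (\<lambda>n. vec_cinner (a n) (c n) - vec_cinner (b n) (c n))"
    by (intro ext) (simp add: algebra_simps sum_subtractf)
  then show ?thesis
    unfolding h2_inner_def
    using suminf_diff[OF summable_vec_cinner_H2[OF assms(1,3)] summable_vec_cinner_H2[OF assms(2,3)]]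
    by simp
qed

lemma h2_nearest_point_orthogonal:
  assumes M: "h2_closed_subspace M" and f: "f \<in> H2" and g: "g \<in> M"
    and nearest: "\<And>a. a \<in> M \<Longrightarrow> h2_sqnorm (\<lambda>n. f n - g n) \<le> h2_sqnorm (\<lambda>n. f n - a n)"
    and h: "h \<in> M"
  shows "h2_inner (\<lambda>n. f n - g n) h = 0"
proof -
  have MH: "M \<subseteq> H2" by (rule h2_closed_subspace_subset[OF M])
  let ?u = "\<lambda>n. f n - g n"
  have u: "?u \<in> H2" using f g MH by (auto intro: H2_diff)
  have "h2_rinner ?u k = 0" if k: "k \<in> M" for k
  proof (rule quadratic_nonneg_imp_linear_coeff_zero)
    show "0 \<le> h2_sqnorm k" using k MH by (auto intro: h2_sqnorm_nonneg)
    fix t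
    have "(\<lambda>n. g n + t *\<^sub>R k n) \<in> M"
      using M g k by (intro h2_closed_subspace_add h2_closed_subspace_scaleR)
    then have "h2_sqnorm ?u \<le> h2_sqnorm (\<lambda>n. f n - (g n + t *\<^sub>R k n))" by (rule nearest)
    also have "(\<lambda>n. f n - (g n + t *\<^sub>R k n)) = (\<lambda>n. ?u n + (- t) *\<^sub>R k n)"
      by (simp add: algebra_simps)
    also have "h2_sqnorm \<dots> = h2_sqnorm ?u + 2 * (- t) * h2_rinner ?u k + (- t)\<^sup>2 * h2_sqnorm k"
      using u k MH by (intro h2_sqnorm_add_scaleR) auto
    finally show "0 \<le> t\<^sup>2 * h2_sqnorm k - 2 * t * h2_rinner ?u k" by simp
  qed
  moreover have "(\<lambda>n. \<i> *s h n) \<in> M" using M h by (rule h2_closed_subspace_smult)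
  ultimately show ?thesis using u h MH by (intro h2_inner_eq_0I) auto
qed

lemma h2_closed_subspace_projection_exists:
  assumes "h2_closed_subspace M" "f \<in> H2"
  obtains g where "g \<in> M" "\<And>h. h \<in> M \<Longrightarrow> h2_inner (\<lambda>n. f n - g n) h = 0"
proof -
  obtain g where "g \<in> M"
    "\<And>a. a \<in> M \<Longrightarrow> h2_sqnorm (\<lambda>n. f n - g n) \<le> h2_sqnorm (\<lambda>n. f n - a n)"
    using h2_closed_subspace_nearest_point[OF assms] by blast
  with h2_nearest_point_orthogonal[OF assms] show ?thesis using that by blast
qed

lemma oproj_eqI:
  assumes N: "N \<subseteq> H2" "\<And>a b. a \<in> N \<Longrightarrow> b \<in> N \<Longrightarrow> (\<lambda>n. a n - b n) \<in> N"
    and f: "f \<in> H2" and g: "g \<in> N" and orth: "\<And>h. h \<in> N \<Longrightarrow> h2_inner (\<lambda>n. f n - g n) h = 0"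
  shows "oproj N f = g"
  unfolding oproj_def
proof (rule the_equality)
  show "g \<in> N \<and> (\<forall>h\<in>N. h2_inner (\<lambda>n. f n - g n) h = 0)" using g orth by blast
  fix g' assume g': "g' \<in> N \<and> (\<forall>h\<in>N. h2_inner (\<lambda>n. f n - g' n) h = 0)"
  let ?w = "\<lambda>n. g n - g' n"
  have w: "?w \<in> N" "?w \<in> H2" using N g g' by auto
  have H: "g \<in> H2" "g' \<in> H2" "(\<lambda>n. f n - g n) \<in> H2" "(\<lambda>n. f n - g' n) \<in> H2"
    using N f g g' by (auto intro: H2_diff)
  \<comment> \<open>both residuals are orthogonal to the difference of the candidates, which lies in N\<close>
  have "(\<lambda>n. (f n - g' n) - (f n - g n)) = ?w" by auto
  then have "h2_inner ?w ?w = h2_inner (\<lambda>n. f n - g' n) ?w - h2_inner (\<lambda>n. f n - g n) ?w"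
    using h2_inner_diff_left[OF H(4) H(3) w(2)] by simp
  also have "\<dots> = 0" using g' orth w by simp
  finally have "h2_sqnorm ?w = 0" using h2_inner_self[OF w(2)] by simp
  then show "g' = g" using h2_sqnorm_eq_0_iff[OF w(2)] by (simp add: fun_eq_iff)
qed

lemma P_M_projection:
  assumes M: "h2_closed_subspace M" and f: "f \<in> H2"
  shows "P_M M f \<in> M" "\<And>h. h \<in> M \<Longrightarrow> h2_inner (\<lambda>n. f n - P_M M f n) h = 0"
proof -
  obtain g where g: "g \<in> M" "\<And>h. h \<in> M \<Longrightarrow> h2_inner (\<lambda>n. f n - g n) h = 0"
    using h2_closed_subspace_projection_exists[OF M f] by blast
  have "P_M M f = g"
    unfolding P_M_def
    using h2_closed_subspace_subset[OF M] h2_closed_subspace_diff[OF M] f g by (rule oproj_eqI)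
  with g show "P_M M f \<in> M" "\<And>h. h \<in> M \<Longrightarrow> h2_inner (\<lambda>n. f n - P_M M f n) h = 0" by auto
qed

lemma h2_inner_bshift:
  assumes "a \<in> H2" "b \<in> H2"
  shows "h2_inner (bshift a) b = h2_inner a (shift b)"
proof -
  have summable: "summable (\<lambda>n. vec_cinner (a n) (shift b n))"
    using assms by (intro summable_vec_cinner_H2 H2_shift)
  have "h2_inner a (shift b) = (\<Sum>n. vec_cinner (a (Suc n)) (shift b (Suc n)))"
    unfolding h2_inner_def using suminf_split_head[OF summable] by (simp add: shift_def)
  also have "\<dots> = h2_inner (bshift a) b"
    unfolding h2_inner_def by (simp add: shift_def bshift_def)
  finally show ?thesis by simp
qed

lemma h2_inner_at_zero: "h2_inner u (\<lambda>n. if n = 0 then v else 0) = vec_cinner (u 0) v"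
  unfolding h2_inner_def by (subst suminf_finite[of "{0}"]) auto

lemma at_zero_mem_ker_bshift: "(\<lambda>n. if n = 0 then v else 0) \<in> ker_bshift"
  unfolding ker_bshift_def bshift_def using H2_at_zero by auto

lemma shift_bshift_mem:
  assumes M: "h2_closed_subspace M" and ker: "ker_bshift \<subseteq> M" and m: "m \<in> M"
  shows "shift (bshift m) \<in> M"
proof -
  have "(\<lambda>n. if n = 0 then m 0 else 0) \<in> M" using ker at_zero_mem_ker_bshift by blast
  moreover have "shift (bshift m) = (\<lambda>n. m n - (if n = 0 then m 0 else 0))"
    by (auto simp: shift_def bshift_def fun_eq_iff)
  ultimately show ?thesis using h2_closed_subspace_diff[OF M m] by simp
qed

lemma R_M_bshift:
  assumes M: "h2_closed_subspace M" and ker: "ker_bshift \<subseteq> M" and f: "f \<in> H2"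
  shows "R_M M (bshift f) = bshift (P_M M f)"
  unfolding R_M_def
proof (rule oproj_eqI)
  have MH: "M \<subseteq> H2" by (rule h2_closed_subspace_subset[OF M])
  show "bshift ` M \<subseteq> H2" using MH H2_bshift by auto
  show "(\<lambda>n. a n - b n) \<in> bshift ` M" if ab: "a \<in> bshift ` M" "b \<in> bshift ` M" for a b
  proof -
    obtain a' b' where ab: "a' \<in> M" "b' \<in> M" "a = bshift a'" "b = bshift b'" using ab by auto
    then have "(\<lambda>n. a n - b n) = bshift (\<lambda>n. a' n - b' n)" by (simp add: bshift_def)
    with h2_closed_subspace_diff[OF M ab(1,2)] show ?thesis by simp
  qed
  show "bshift f \<in> H2" using f by (rule H2_bshift)
  show "bshift (P_M M f) \<in> bshift ` M" using P_M_projection(1)[OF M f] by simp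
  show "h2_inner (\<lambda>n. bshift f n - bshift (P_M M f) n) h = 0" if h: "h \<in> bshift ` M" for h
  proof -
    let ?r = "\<lambda>n. f n - P_M M f n"
    have r: "?r \<in> H2" using f P_M_projection(1)[OF M f] MH by (auto intro: H2_diff)
    obtain m where m: "m \<in> M" "h = bshift m" using h by auto
    have "(\<lambda>n. bshift f n - bshift (P_M M f) n) = bshift ?r" by (simp add: bshift_def)
    then have "h2_inner (\<lambda>n. bshift f n - bshift (P_M M f) n) h = h2_inner ?r (shift h)"
      using h2_inner_bshift[OF r, of h] m MH H2_bshift by auto
    also have "\<dots> = 0"
      using P_M_projection(2)[OF M f] shift_bshift_mem[OF M ker m(1)] m(2) by simp
    finally show ?thesis .
  qed
qed

lemma P_M_vanishes_at_zero:
  assumes M: "h2_closed_subspace M" and ker: "ker_bshift \<subseteq> M"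
    and f: "f \<in> H2" and f0: "f 0 = 0"
  shows "P_M M f 0 = 0"
proof -
  let ?g = "P_M M f"
  have "(\<lambda>n. if n = 0 then ?g 0 else 0) \<in> M" using ker at_zero_mem_ker_bshift by blast
  then have "0 = h2_inner (\<lambda>n. f n - ?g n) (\<lambda>n. if n = 0 then ?g 0 else 0)"
    using P_M_projection(2)[OF M f] by simp
  also have "\<dots> = - vec_cinner (?g 0) (?g 0)"
    by (simp add: h2_inner_at_zero f0 sum_negf)
  also have "\<dots> = - of_real ((norm (?g 0))\<^sup>2)" by (simp only: vec_cinner_self)
  finally show ?thesis by simp
qed

theorem lemma4p2:
  fixes M :: "('p::finite) h2seq set"
  assumes "h2_closed_subspace M"
    and "bshift ` M \<subseteq> M"
    and "ker_bshift \<subseteq> M"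
  shows "(\<forall>f\<in>H2. R_M M f = bshift (P_M M (shift f))) \<and>
         (\<forall>f\<in>H2. R_M M (bshift f) = bshift (P_M M f)) \<and>
         (\<forall>f\<in>H2. Q_M M f = P_M M (shift f))"
proof -
  have R: "R_M M f = bshift (P_M M (shift f))" if "f \<in> H2" for f
    using R_M_bshift[OF assms(1,3) H2_shift[OF that]] by simp
  moreover have "Q_M M f = P_M M (shift f)" if "f \<in> H2" for f
  proof -
    have "shift f 0 = 0" by (simp add: shift_def)
    with P_M_vanishes_at_zero[OF assms(1,3) H2_shift[OF that]]
    have "P_M M (shift f) 0 = 0" .
    then show ?thesis unfolding Q_M_def R[OF that] by (rule shift_bshift)
  qed
  ultimately show ?thesis using R_M_bshift[OF assms(1,3)] by blast
qed

end
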